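(* Let $\theta>1$ be real and $n$ a positive integer. Then $n\in\mathcal A_\theta$ if and only if both \[\left\{\frac{2n}{\log\theta}\right\}\geq 1-2f\!\left(\frac{\log\theta}{n}\right)\quad\text{and}\quad \left\{\frac{n}{\log\theta}\right\}<1-f\!\left(\frac{\log\theta}{n}\right).\]
   Context: $\lfloor x\rfloor$ is the floor and $\{x\}=x-\lfloor x\rfloor$ the fractional part; $\log$ is the natural logarithm. $M'_\theta(n)=\left\lfloor 1/(\theta^{1/n}-1)\right\rfloor$ and $\mathcal A_\theta=\{n\in\mathbb N: M'_\theta(n)\neq \lfloor n/\log\theta-1/2\rfloor\}$. For $t>0$, $f(t)=\frac{1}{e^t-1}-\frac1t+\frac12$. *)

theory Defs
  imports Complex_Main
begin

definition Mprime :: "real \<Rightarrow> nat \<Rightarrow> int" where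
  "Mprime \<theta> n = \<lfloor>1 / (\<theta> powr (1 / real n) - 1)\<rfloor>"

definition A_set :: "real \<Rightarrow> nat set" where
  "A_set \<theta> = {n. n \<ge> 1 \<and> Mprime \<theta> n \<noteq> \<lfloor>real n / ln \<theta> - 1/2\<rfloor>}"

definition f_fun :: "real \<Rightarrow> real" where
  "f_fun t = 1 / (exp t - 1) - 1 / t + 1/2"

end

theory Submission
  imports Defs
begin

(*
  Write t = log(theta)/n and x = n/log(theta) = 1/t.  Since theta^(1/n) = e^t, the
  definition of f gives the exact expansion

      1/(theta^(1/n) - 1) = 1/(e^t - 1) = (x - 1/2) + f(t),

  so M'_theta(n) = floor((x - 1/2) + f(t)) and n lies in A_theta exactly when adding
  f(t) to x - 1/2 moves it past an integer.  The proof has three ingredients: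
    (1) 0 < f(t) < 1/2 for t > 0 (the lower bound is the inequality
        (2 - t) e^t < 2 + t, proved by monotonicity);
    (2) for 0 <= g < 1, floor(y + g) differs from floor(y) iff frac(y) >= 1 - g;
    (3) for g <= 1/2, frac(x - 1/2) >= 1 - g iff frac(2x) >= 1 - 2g and frac(x) < 1 - g,
        by splitting on whether frac(x) < 1/2.
  The theorem follows by chaining (2) and (3) with g = f(t).
*)

text \<open>The Pade-type bound \<open>(2 - t) e^t < 2 + t\<close>: the left minus the right side
  vanishes at \<open>0\<close> and has derivative \<open>(1 - s) e^s - 1 < 0\<close> for \<open>s > 0\<close>.\<close>

lemma exp_pade_bound:
  fixes t :: real
  assumes "t > 0"
  shows "(2 - t) * exp t < 2 + t"
proof -
  let ?h = "\<lambda>s::real. (2 - s) * exp s - 2 - s"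
  have "?h t < ?h 0"
  proof (rule DERIV_neg_imp_decreasing_open[OF assms])
    fix s :: real
    assume s: "0 < s" "s < t"
    have deriv: "DERIV ?h s :> (1 - s) * exp s - 1"
      by (auto intro!: derivative_eq_intros simp: algebra_simps)
    have "(1 - s) * exp s < exp (-s) * exp s"
      using exp_minus_greater[of s] s by (intro mult_strict_right_mono) auto
    then have "(1 - s) * exp s - 1 < 0"
      by (simp add: exp_add[symmetric])
    with deriv show "\<exists>y. DERIV ?h s :> y \<and> y < 0" by blast
  next
    show "continuous_on {0..t} ?h" by (intro continuous_intros)
  qed
  then show ?thesis by simp
qed

text \<open>For \<open>t > 0\<close> the correction term \<open>f(t)\<close> lies strictly between \<open>0\<close> and \<open>1/2\<close>;
  this is what makes \<open>M'_\<theta>(n)\<close> differ from \<open>\<lfloor>n/log \<theta> - 1/2\<rfloor>\<close> by at most one.\<close>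

lemma f_fun_bounds:
  fixes t :: real
  assumes t: "t > 0"
  shows "0 < f_fun t" and "f_fun t < 1/2"
proof -
  have exp_gt: "exp t - 1 > t"
    using exp_minus_greater[of "-t"] t by simp
  then have "1 / (exp t - 1) < 1 / t"
    using t by (simp add: frac_less2)
  then show "f_fun t < 1/2"
    unfolding f_fun_def by simp
  have denom_pos: "2 * t * (exp t - 1) > 0"
    using t exp_gt by simp
  have "f_fun t * (2 * t * (exp t - 1)) = 2 + t - (2 - t) * exp t"
    unfolding f_fun_def using t exp_gt by (simp add: field_simps)
  also have "\<dots> > 0"
    using exp_pade_bound[OF t] by simp
  finally show "0 < f_fun t"
    using denom_pos by (simp add: zero_less_mult_iff)
qed

lemma Mprime_expansion:
  fixes \<theta> :: real and n :: nat
  assumes "\<theta> > 1" and "n \<ge> 1"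
  shows "Mprime \<theta> n = \<lfloor>(real n / ln \<theta> - 1/2) + f_fun (ln \<theta> / real n)\<rfloor>"
proof -
  have "\<theta> powr (1 / real n) = exp (ln \<theta> / real n)"
    using assms by (simp add: powr_def)
  moreover have "real n / ln \<theta> = 1 / (ln \<theta> / real n)"
    by simp
  ultimately show ?thesis
    unfolding Mprime_def f_fun_def by simp
qed

lemma floor_add_ne_iff:
  fixes y g :: real
  assumes "0 \<le> g" "g < 1"
  shows "\<lfloor>y + g\<rfloor> \<noteq> \<lfloor>y\<rfloor> \<longleftrightarrow> frac y \<ge> 1 - g"
proof -
  have y: "y = of_int \<lfloor>y\<rfloor> + frac y" "frac y < 1"
    by (simp add: frac_def) (rule frac_lt_1)
  have "\<lfloor>y + g\<rfloor> \<noteq> \<lfloor>y\<rfloor> \<longleftrightarrow> \<lfloor>y + g\<rfloor> \<ge> \<lfloor>y\<rfloor> + 1"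
    using floor_mono[of y "y + g"] assms by auto
  also have "\<dots> \<longleftrightarrow> y + g \<ge> of_int (\<lfloor>y\<rfloor> + 1)"
    by (simp only: le_floor_iff)
  also have "\<dots> \<longleftrightarrow> frac y \<ge> 1 - g"
    using y by linarith
  finally show ?thesis .
qed

lemma frac_minus_half_iff:
  fixes x g :: real
  assumes "g \<le> 1/2"
  shows "frac (x - 1/2) \<ge> 1 - g \<longleftrightarrow> frac (2 * x) \<ge> 1 - 2 * g \<and> frac x < 1 - g"
proof -
  define k where "k = \<lfloor>x\<rfloor>"
  define u where "u = frac x"
  have x: "x = of_int k + u" "0 \<le> u" "u < 1"
    unfolding k_def u_def by (simp_all add: frac_def frac_lt_1[unfolded frac_def])
  show ?thesis
  proof (cases "u < 1/2")
    case True
    have "\<lfloor>x - 1/2\<rfloor> = k - 1" and "\<lfloor>2 * x\<rfloor> = 2 * k"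
      using x True by (intro floor_unique; simp)+
    then have "frac (x - 1/2) = u + 1/2" "frac (2 * x) = 2 * u"
      using x by (simp_all add: frac_def)
    then show ?thesis
      using True assms by (auto simp: u_def[symmetric])
  next
    case False
    have "\<lfloor>x - 1/2\<rfloor> = k" and "\<lfloor>2 * x\<rfloor> = 2 * k + 1"
      using x False by (intro floor_unique; simp)+
    then have "frac (x - 1/2) = u - 1/2" "frac (2 * x) = 2 * u - 1"
      using x by (simp_all add: frac_def)
    then show ?thesis
      using False assms x by (auto simp: u_def[symmetric])
  qed
qed

theorem mainTheorem11:
  fixes \<theta> :: real and n :: nat
  assumes "\<theta> > 1" and "n \<ge> 1"
  shows "n \<in> A_set \<theta> \<longleftrightarrow>
    (frac (2 * real n / ln \<theta>) \<ge> 1 - 2 * f_fun (ln \<theta> / real n) \<and>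
     frac (real n / ln \<theta>) < 1 - f_fun (ln \<theta> / real n))"
proof -
  define x where "x = real n / ln \<theta>"
  define g where "g = f_fun (ln \<theta> / real n)"
  have "ln \<theta> / real n > 0"
    using assms by simp
  then have g: "0 < g" "g < 1/2"
    using f_fun_bounds g_def by auto
  have "n \<in> A_set \<theta> \<longleftrightarrow> \<lfloor>(x - 1/2) + g\<rfloor> \<noteq> \<lfloor>x - 1/2\<rfloor>"
    using assms Mprime_expansion[OF assms] unfolding A_set_def x_def g_def by simp
  also have "\<dots> \<longleftrightarrow> frac (x - 1/2) \<ge> 1 - g"
    using g by (intro floor_add_ne_iff) auto
  also have "\<dots> \<longleftrightarrow> frac (2 * x) \<ge> 1 - 2 * g \<and> frac x < 1 - g"
    using g by (intro frac_minus_half_iff) auto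
  finally show ?thesis
    by (simp add: x_def g_def)
qed

end
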